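(* Let $r \le \min(M,N)$ be positive integers and let $\mathcal{P}=\mathcal{B}_1=\{\mathbf{x}\in\mathbb{R}^r \mid \|\mathbf{x}\|_1\le 1\}$. Let $\mathbf{H}_g\in\mathbb{R}^{M\times r}$ have full column rank, let $\mathbf{S}_g\in\mathbb{R}^{r\times N}$ have all of its columns in $\mathcal{P}$, and set $\mathbf{Y}=\mathbf{H}_g\mathbf{S}_g$. Suppose $\mathbf{S}_g$ is a sufficiently scattered factor corresponding to $\mathcal{P}$ (as defined in the context). Consider the Det-Max optimization problem $$\max_{\mathbf{H}\in\mathbb{R}^{M\times r},\ \mathbf{S}\in\mathbb{R}^{r\times N}} \det(\mathbf{S}\mathbf{S}^T)\quad\text{subject to}\quad \mathbf{Y}=\mathbf{H}\mathbf{S},\ \ \mathbf{S}_{:,j}\in\mathcal{P}\ \ (j=1,\dots,N).$$ Then every global optimum $(\mathbf{H}_*,\mathbf{S}_* )$ of this problem satisfies $$\mathbf{H}_*=\mathbf{H}_g\boldsymbol{\Pi}^T\mathbf{D},\qquad \mathbf{S}_*=\mathbf{D}\boldsymbol{\Pi}\mathbf{S}_g,$$ for some permutation matrix $\boldsymbol{\Pi}\in\mathbb{R}^{r\times r}$ and some diagonal matrix $\mathbf{D}\in\mathbb{R}^{r\times r}$ with diagonal entries in $\{-1,+1\}$.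
   Context: $\mathbf{S}_{:,j}$ denotes the $j$-th column of $\mathbf{S}$; $\mathrm{conv}(\mathbf{S})$ is the convex hull of the columns of $\mathbf{S}$. For a convex polytope $\mathcal{P}\subset\mathbb{R}^r$ with nonempty interior, $\mathcal{E}_\mathcal{P}$ denotes its maximum volume inscribed ellipsoid (MVIE), i.e. the (unique) ellipsoid of maximal volume contained in $\mathcal{P}$, written $\mathcal{E}_\mathcal{P}=\{\mathbf{C}_\mathcal{P}\mathbf{u}+\mathbf{g}_\mathcal{P}\mid \|\mathbf{u}\|_2\le 1\}$ with $\mathbf{C}_\mathcal{P}\succeq 0$ and center $\mathbf{g}_\mathcal{P}$. For a set $C\subset\mathbb{R}^r$ and point $\mathbf{d}$, the polar of $C$ with respect to $\mathbf{d}$ is $C^{*,\mathbf{d}}=\{\mathbf{x}\in\mathbb{R}^r\mid \langle\mathbf{x},\mathbf{y}-\mathbf{d}\rangle\le 1\ \forall \mathbf{y}\in C\}$. $\mathrm{bd}(\cdot)$ denotes boundary and $\mathrm{ext}(\cdot)$ the set of extreme points (vertices). A matrix $\mathbf{S}\in\mathbb{R}^{r\times N}$ is called a sufficiently scattered factor corresponding to $\mathcal{P}$ if (i) $\mathcal{P}\supseteq\mathrm{conv}(\mathbf{S})\supset\mathcal{E}_\mathcal{P}$, and (ii) $\mathrm{conv}(\mathbf{S})^{*,\mathbf{g}_\mathcal{P}}\cap\mathrm{bd}(\mathcal{E}_\mathcal{P}^{*,\mathbf{g}_\mathcal{P}})=\mathrm{ext}(\mathcal{P}^{*,\mathbf{g}_\mathcal{P}})$.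 *)

theory Defs
  imports "HOL-Analysis.Analysis"
begin

definition ellipsoid :: "real^'r^'r \<Rightarrow> real^'r \<Rightarrow> (real^'r) set" where
  "ellipsoid C g = {C *v u + g | u. norm u \<le> 1}"

definition psd_matrix :: "real^'r^'r \<Rightarrow> bool" where
  "psd_matrix C \<longleftrightarrow> transpose C = C \<and> (\<forall>x. 0 \<le> x \<bullet> (C *v x))"

definition is_MVIE :: "(real^'r) set \<Rightarrow> real^'r^'r \<Rightarrow> real^'r \<Rightarrow> bool" where
  "is_MVIE P C g \<longleftrightarrow> psd_matrix C \<and> ellipsoid C g \<subseteq> P \<and>
     (\<forall>C' g'. psd_matrix C' \<and> ellipsoid C' g' \<subseteq> P \<longrightarrow>
        measure lebesgue (ellipsoid C' g') \<le> measure lebesgue (ellipsoid C g))"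

definition polar_wrt :: "(real^'r) set \<Rightarrow> real^'r \<Rightarrow> (real^'r) set" where
  "polar_wrt C d = {x. \<forall>y\<in>C. x \<bullet> (y - d) \<le> 1}"

definition sufficiently_scattered :: "(real^'r) set \<Rightarrow> real^'n^'r \<Rightarrow> bool" where
  "sufficiently_scattered P S \<longleftrightarrow>
     (\<exists>C g. is_MVIE P C g \<and>
        convex hull (columns S) \<subseteq> P \<and>
        ellipsoid C g \<subseteq> convex hull (columns S) \<and>
        polar_wrt (convex hull (columns S)) g \<inter> frontier (polar_wrt (ellipsoid C g) g)
          = {x. x extreme_point_of (polar_wrt P g)})"

definition l1_ball :: "(real^'r) set" where
  "l1_ball = {x. (\<Sum>i\<in>UNIV. \<bar>x $ i\<bar>) \<le> 1}"

definition permutation_matrix :: "real^'r^'r \<Rightarrow> bool" where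
  "permutation_matrix Q \<longleftrightarrow>
     (\<exists>p. p permutes (UNIV :: 'r set) \<and> Q = (\<chi> i j. if p i = j then 1 else 0))"

definition sign_diagonal :: "real^'r^'r \<Rightarrow> bool" where
  "sign_diagonal D \<longleftrightarrow>
     (\<exists>d. (\<forall>i. d i = 1 \<or> d i = -1) \<and> D = (\<chi> i j. if i = j then d i else 0))"

definition detmax_feasible :: "real^'n^'m \<Rightarrow> (real^'r) set \<Rightarrow> real^'r^'m \<Rightarrow> real^'n^'r \<Rightarrow> bool" where
  "detmax_feasible Y P H S \<longleftrightarrow> Y = H ** S \<and> (\<forall>j. column j S \<in> P)"

definition detmax_optimal :: "real^'n^'m \<Rightarrow> (real^'r) set \<Rightarrow> real^'r^'m \<Rightarrow> real^'n^'r \<Rightarrow> bool" where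
  "detmax_optimal Y P H S \<longleftrightarrow> detmax_feasible Y P H S \<and>
     (\<forall>H' S'. detmax_feasible Y P H' S' \<longrightarrow>
        det (S' ** transpose S') \<le> det (S ** transpose S))"

end

theory Submission
  imports Defs
begin

text \<open>
  An ellipsoid \<open>E(Z, h)\<close> inside the \<open>\<ell>\<^sub>1\<close> ball lies below every supporting hyperplane
  \<open>s \<bullet> y = 1\<close>, \<open>s\<close> a sign vector, which gives \<open>\<parallel>Z\<^sup>T s\<parallel> + s \<bullet> h \<le> 1\<close>; averaging over all sign
  vectors bounds the Frobenius norm of \<open>Z\<close> by 1. Hadamard's inequality and AM-GM then give
  \<open>det(Z)\<^sup>2 \<le> r\<^sup>-\<^sup>r\<close>, with equality only if \<open>Z Z\<^sup>T = I/r\<close> and \<open>h = 0\<close>; as the ball of radius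
  \<open>1/\<surd>r\<close> attains the bound, this pins down the maximum volume inscribed ellipsoid \<open>E(C, 0)\<close>.

  If \<open>(H\<^sub>*, S\<^sub>*)\<close> is optimal, then \<open>S\<^sub>* = A S\<^sub>g\<close> with \<open>det(A)\<^sup>2 \<ge> 1\<close>, and \<open>A\<close> maps
  \<open>conv(S\<^sub>g) \<supseteq> E(C, 0)\<close> into the \<open>\<ell>\<^sub>1\<close> ball. So \<open>E(AC, 0)\<close> is again an inscribed ellipsoid
  of maximal determinant, which forces \<open>A\<close> to be orthogonal. Then \<open>A\<^sup>T\<close> sends each sign vector
  into the polar of \<open>conv(S\<^sub>g)\<close> and onto the boundary of the polar of \<open>E(C, 0)\<close>, hence, by
  sufficient scatteredness, to a vertex of the cube, i.e. to a sign vector. An orthogonal matrix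
  permuting the sign vectors is a signed permutation matrix.
\<close>

section \<open>Volume of linear images\<close>

definition scales_measure_by_det :: "(real^'n \<Rightarrow> real^'n) \<Rightarrow> bool" where
  "scales_measure_by_det f \<longleftrightarrow> (\<forall>S \<in> lmeasurable. f ` S \<in> lmeasurable \<and>
     measure lebesgue (f ` S) = \<bar>det (matrix f)\<bar> * measure lebesgue S)"

lemma scales_measure_by_det_if_cbox:
  assumes "linear f"
    and "\<And>a b. measure lebesgue (f ` cbox a b) = \<bar>det (matrix f)\<bar> * measure lebesgue (cbox a b)"
  shows "scales_measure_by_det f"
  using measure_linear_sufficient [OF assms(1) _ assms(2)] by (metis scales_measure_by_det_def)

lemma scales_measure_by_det_comp:
  fixes f g :: "real^'n \<Rightarrow> real^'n"
  assumes "linear f" "linear g" "scales_measure_by_det f" "scales_measure_by_det g"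
  shows "scales_measure_by_det (f \<circ> g)"
  unfolding scales_measure_by_det_def
proof
  fix S :: "(real^'n) set"
  assume "S \<in> lmeasurable"
  with assms(4) have gS: "g ` S \<in> lmeasurable"
    "measure lebesgue (g ` S) = \<bar>det (matrix g)\<bar> * measure lebesgue S"
    by (auto simp: scales_measure_by_det_def)
  with assms(3) have "f ` g ` S \<in> lmeasurable"
    "measure lebesgue (f ` g ` S) = \<bar>det (matrix f)\<bar> * measure lebesgue (g ` S)"
    by (auto simp: scales_measure_by_det_def)
  with gS show "(f \<circ> g) ` S \<in> lmeasurable \<and>
      measure lebesgue ((f \<circ> g) ` S) = \<bar>det (matrix (f \<circ> g))\<bar> * measure lebesgue S"
    by (simp add: image_image mult.assoc matrix_compose [OF assms(2,1)] det_mul abs_mult)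
qed

lemma scales_measure_by_det_singular:
  fixes f :: "real^'n \<Rightarrow> real^'n"
  assumes "linear f" and "\<And>x. f x $ i = 0"
  shows "scales_measure_by_det f"
proof -
  have "\<not> inj f"
    using assms by (metis linear_injective_imp_surjective one_neq_zero surjE vec_component)
  then have "det (matrix f) = 0"
    using det_nz_iff_inj [OF assms(1)] by blast
  with assms(1) \<open>\<not> inj f\<close> show ?thesis
    using negligible_linear_singular_image negligible_imp_measurable negligible_imp_measure0
    by (fastforce simp: scales_measure_by_det_def)
qed

lemma scales_measure_by_det_stretch:
  "scales_measure_by_det (\<lambda>x :: real^'n. \<chi> i. c i * x $ i)"
proof -
  have "matrix (\<lambda>x :: real^'n. \<chi> i. c i * x $ i) = (\<chi> i j. if i = j then c i else 0)"
    by (simp add: matrix_def axis_def vec_eq_iff)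
  then show ?thesis
    by (simp add: scales_measure_by_det_def measurable_stretch measure_stretch det_diagonal)
qed

lemma scales_measure_by_det_transposition:
  "scales_measure_by_det (\<lambda>x :: real^'n. \<chi> i. x $ Transposition.transpose m n i)"
proof (rule scales_measure_by_det_if_cbox)
  let ?h = "\<lambda>x :: real^'n. \<chi> i. x $ Transposition.transpose m n i"
  show "linear ?h"
    by (rule linearI) (simp_all add: vec_eq_iff)
  have "matrix ?h = (\<chi> i. mat 1 $ Transposition.transpose m n i)"
    by (simp add: matrix_def axis_def mat_def vec_eq_iff)
  then have "\<bar>det (matrix ?h)\<bar> = 1"
    by (simp add: det_permute_rows permutes_swap_id sign_swap_id)
  moreover have "measure lebesgue (?h ` cbox a b) = measure lebesgue (cbox a b)" for a b
  proof -
    have box: "?h ` cbox a b = cbox (?h a) (?h b)"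
      by (auto simp: image_iff lambda_swap_Galois mem_box_cart) (metis transpose_involutory)+
    show ?thesis
    proof (cases "cbox a b = {}")
      case False
      then have "cbox (?h a) (?h b) \<noteq> {}"
        using box by blast
      moreover have "(\<Prod>i\<in>UNIV. ?h b $ i - ?h a $ i) = (\<Prod>i\<in>UNIV. b $ i - a $ i)"
        using prod.permute [OF permutes_swap_id, where S=UNIV and g="\<lambda>i. b $ i - a $ i"]
        by (simp add: o_def)
      ultimately show ?thesis
        using False by (simp add: box content_cbox_cart)
    qed simp
  qed
  ultimately show "measure lebesgue (?h ` cbox a b) = \<bar>det (matrix ?h)\<bar> * measure lebesgue (cbox a b)"
    for a b
    by simp
qed

lemma scales_measure_by_det_shear:
  assumes "m \<noteq> n"
  shows "scales_measure_by_det (\<lambda>x :: real^'n. \<chi> i. if i = m then x $ m + x $ n else x $ i)"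
proof (rule scales_measure_by_det_if_cbox)
  let ?h = "\<lambda>x :: real^'n. \<chi> i. if i = m then x $ m + x $ n else x $ i"
  show "linear ?h"
    by (rule linearI) (simp_all add: vec_eq_iff distrib_left)
  have "matrix ?h = (\<chi> k. if k = m then row m (mat 1) + 1 *s row n (mat 1) else row k (mat 1))"
    by (simp add: matrix_def axis_def mat_def row_def vec_eq_iff)
  then have "det (matrix ?h) = 1"
    using det_row_operation [OF assms, where c=1 and A="mat 1 :: real^'n^'n"] by simp
  moreover have "measure lebesgue (?h ` cbox a b) = measure lebesgue (cbox a b)" for a b
  proof (cases "cbox a b = {}")
    case False
    \<comment> \<open>\<open>measure_shear_interval\<close> needs a box in the half-space \<open>0 \<le> x $ n\<close>: translate to \<open>0\<close>\<close>
    then have ne: "cbox 0 (b - a) \<noteq> {}"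
      by (auto simp: box_ne_empty inner_diff_left)
    have "cbox a b = (+) a ` cbox 0 (b - a)"
      using cbox_translation [of a 0 "b - a"] by simp
    then have "?h ` cbox a b = (+) (?h a) ` (?h ` cbox 0 (b - a))"
      by (auto simp: image_iff vec_eq_iff)
    then have "measure lebesgue (?h ` cbox a b) = measure lebesgue (?h ` cbox 0 (b - a))"
      by (simp add: measure_translation)
    also have "\<dots> = measure lebesgue (cbox 0 (b - a))"
      using measure_shear_interval [OF assms ne] by simp
    also have "\<dots> = measure lebesgue (cbox a b)"
      using cbox_translation [of a 0 "b - a"] by (simp add: measure_translation)
    finally show ?thesis .
  qed simp
  ultimately show "measure lebesgue (?h ` cbox a b) = \<bar>det (matrix ?h)\<bar> * measure lebesgue (cbox a b)"
    for a b
    by simp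
qed

text \<open>
  \<open>measure_linear_image\<close> in \<open>Change_Of_Vars\<close> is stated for well-ordered index types only; the
  same reduction to elementary matrices works for every finite index type.
\<close>

lemma scales_measure_by_det_linear:
  fixes f :: "real^'n \<Rightarrow> real^'n"
  assumes "linear f"
  shows "scales_measure_by_det f"
proof (rule induct_linear_elementary [OF assms])
  show "scales_measure_by_det (f \<circ> g)"
    if "linear f" "linear g" "scales_measure_by_det f" "scales_measure_by_det g"
    for f g :: "real^'n \<Rightarrow> real^'n"
    using that by (rule scales_measure_by_det_comp)
  show "scales_measure_by_det f" if "linear f" "\<And>x. f x $ i = 0" for f :: "real^'n \<Rightarrow> real^'n" and i
    using that by (rule scales_measure_by_det_singular)
qed (simp_all add: scales_measure_by_det_stretch scales_measure_by_det_transposition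
  scales_measure_by_det_shear)

section \<open>Hadamard's inequality on the unit Frobenius ball\<close>

lemma det_scaleR: "det (c *\<^sub>R A) = c ^ CARD('n) * det (A :: real^'n^'n)"
proof -
  have "c *\<^sub>R A = mat c ** A"
    by (simp add: vec_eq_iff matrix_matrix_mult_def mat_def if_distrib [of "\<lambda>x. x * _"]
        cong: if_cong)
  then show ?thesis
    by (simp add: det_mul flip: matrix_scaleR)
qed

lemma power2_norm_matrix: "(norm M)\<^sup>2 = (\<Sum>i\<in>UNIV. M $ i \<bullet> M $ i)" for M :: "real^'n^'m"
proof -
  have "(norm M)\<^sup>2 = (\<Sum>i\<in>UNIV. (norm (M $ i))\<^sup>2)"
    by (simp add: norm_vec_def L2_set_def sum_nonneg)
  then show ?thesis
    by (simp add: power2_norm_eq_inner)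
qed

lemma matrix_mult_transpose_entry: "(M ** transpose M) $ i $ k = M $ i \<bullet> M $ k"
  for M :: "real^'n^'m"
  by (simp add: matrix_matrix_mult_def transpose_def inner_vec_def)

lemma prod_less_inverse_card_power:
  fixes x :: "'n::finite \<Rightarrow> real"
  assumes nonneg: "\<And>i. 0 \<le> x i" and sum: "(\<Sum>i\<in>UNIV. x i) \<le> 1"
    and "x k \<noteq> 1 / CARD('n)"
  shows "(\<Prod>i\<in>UNIV. x i) < (1 / CARD('n)) ^ CARD('n)"
proof (cases "\<exists>i. x i = 0")
  case False
  let ?n = "real CARD('n)"
  have pos: "0 < x i" for i
    using False nonneg [of i] by (metis order_le_less)
  \<comment> \<open>\<open>ln t \<le> t - 1\<close>, strictly unless \<open>t = 1\<close>, applied to \<open>t = n x\<^sub>i\<close>\<close>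
  have "(\<Sum>i\<in>UNIV. ln (x i) - ln (1 / ?n)) < (\<Sum>i\<in>UNIV. (x i - 1 / ?n) / (1 / ?n))"
  proof (rule sum_strict_mono_ex1)
    show "\<forall>i\<in>UNIV. ln (x i) - ln (1 / ?n) \<le> (x i - 1 / ?n) / (1 / ?n)"
      by (intro ballI ln_diff_le pos) simp
    show "\<exists>i\<in>UNIV. ln (x i) - ln (1 / ?n) < (x i - 1 / ?n) / (1 / ?n)"
      using ln_diff_less [OF pos [of k], of "1 / ?n"] \<open>x k \<noteq> 1 / CARD('n)\<close> by auto
  qed simp
  also have "\<dots> = ?n * (\<Sum>i\<in>UNIV. x i) - ?n"
    by (simp add: left_diff_distrib sum_subtractf flip: sum_distrib_right)
  also have "\<dots> \<le> 0"
    using sum by (simp add: mult_left_le)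
  finally have "(\<Sum>i\<in>UNIV. ln (x i) - ln (1 / ?n)) < 0" .
  moreover have "ln (\<Prod>i\<in>UNIV. x i) = (\<Sum>i\<in>UNIV. ln (x i))"
    by (rule ln_prod) (use pos in \<open>auto simp: less_le\<close>)
  ultimately have "ln (\<Prod>i\<in>UNIV. x i) < ln ((1 / ?n) ^ CARD('n))"
    by (simp add: ln_realpow sum_subtractf)
  then show ?thesis
    using pos by (simp add: prod_pos)
next
  case True
  then have "(\<Prod>i\<in>UNIV. x i) = 0"
    by (simp add: prod_zero_iff)
  moreover have "0 < (1 / real CARD('n)) ^ CARD('n)"
    by simp
  ultimately show ?thesis
    by linarith
qed

lemma det_sq_eq_prod_if_orthogonal_rows:
  fixes M :: "real^'n^'n"
  assumes "\<And>i k. i \<noteq> k \<Longrightarrow> M $ i \<bullet> M $ k = 0"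
  shows "(det M)\<^sup>2 = (\<Prod>i\<in>UNIV. M $ i \<bullet> M $ i)"
proof -
  have "(det M)\<^sup>2 = det (M ** transpose M)"
    by (simp add: det_mul power2_eq_square)
  also have "\<dots> = (\<Prod>i\<in>UNIV. (M ** transpose M) $ i $ i)"
    by (rule det_diagonal) (simp add: matrix_mult_transpose_entry assms)
  finally show ?thesis
    by (simp add: matrix_mult_transpose_entry)
qed

lemma norm_det_scaled_identity:
  defines "I\<^sub>0 \<equiv> (1 / sqrt CARD('n)) *\<^sub>R (mat 1 :: real^'n^'n)"
  shows "norm I\<^sub>0 = 1" and "(det I\<^sub>0)\<^sup>2 = (1 / CARD('n)) ^ CARD('n)"
proof -
  have "mat 1 $ i \<bullet> (mat 1 :: real^'n^'n) $ i = 1" for i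
    by (simp add: inner_vec_def mat_def if_distrib cong: if_cong)
  then have "(norm I\<^sub>0)\<^sup>2 = 1"
    by (simp add: I\<^sub>0_def power2_norm_matrix power_mult_distrib power_divide flip: norm_scaleR)
  then show "norm I\<^sub>0 = 1"
    using norm_ge_zero [of I\<^sub>0] by (auto simp: power2_eq_1_iff)
  show "(det I\<^sub>0)\<^sup>2 = (1 / CARD('n)) ^ CARD('n)"
    by (simp add: I\<^sub>0_def det_scaleR power_divide)
      (metis power_mult mult.commute real_sqrt_pow2 of_nat_0_le_iff)
qed

lemma det_norm_orthogonalize_row:
  fixes M :: "real^'n^'n"
  assumes "i \<noteq> k" and "M $ k \<noteq> 0" and "M $ i \<bullet> M $ k \<noteq> 0"
  defines "M' \<equiv> \<chi> j. if j = i then M $ i - (M $ i \<bullet> M $ k / (M $ k \<bullet> M $ k)) *\<^sub>R M $ k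
                      else M $ j"
  shows "det M' = det M" and "norm M' < norm M"
proof -
  let ?c = "M $ i \<bullet> M $ k / (M $ k \<bullet> M $ k)"
  have "M' = (\<chi> j. if j = i then row i M + (- ?c) *s row k M else row j M)"
    by (simp add: M'_def vec_eq_iff row_def scalar_mult_eq_scaleR)
  then show "det M' = det M"
    by (simp only: det_row_operation [OF \<open>i \<noteq> k\<close>])
  have Mk: "0 < M $ k \<bullet> M $ k"
    using assms(2) by simp
  have "(a - c *\<^sub>R b) \<bullet> (a - c *\<^sub>R b) = a \<bullet> a - 2 * c * (a \<bullet> b) + c\<^sup>2 * (b \<bullet> b)"
    for a b :: "real^'n" and c
    by (simp add: inner_diff_left inner_diff_right inner_commute [of b a] power2_eq_square
        algebra_simps)
  moreover have "a - 2 * (p / q) * p + (p / q)\<^sup>2 * q = a - p\<^sup>2 / q" if "0 < q" for a p q :: real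
    using that by (simp add: power2_eq_square field_simps)
  ultimately have "M' $ j \<bullet> M' $ j
      = M $ j \<bullet> M $ j - (if j = i then (M $ i \<bullet> M $ k)\<^sup>2 / (M $ k \<bullet> M $ k) else 0)" for j
    using Mk by (simp add: M'_def)
  then have "(norm M')\<^sup>2 = (norm M)\<^sup>2 - (M $ i \<bullet> M $ k)\<^sup>2 / (M $ k \<bullet> M $ k)"
    by (simp add: power2_norm_matrix sum_subtractf)
  moreover have "0 < (M $ i \<bullet> M $ k)\<^sup>2 / (M $ k \<bullet> M $ k)"
    using assms(3) Mk by simp
  ultimately have "(norm M')\<^sup>2 < (norm M)\<^sup>2"
    by linarith
  then show "norm M' < norm M"
    by (rule power_less_imp_less_base) simp
qed

lemma rows_orthogonal_if_det_sq_maximal: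
  fixes M :: "real^'n^'n"
  assumes norm: "norm M \<le> 1" and det: "det M \<noteq> 0"
    and max: "\<And>N :: real^'n^'n. norm N \<le> 1 \<Longrightarrow> (det N)\<^sup>2 \<le> (det M)\<^sup>2"
    and "i \<noteq> k"
  shows "M $ i \<bullet> M $ k = 0"
proof (rule ccontr)
  assume "M $ i \<bullet> M $ k \<noteq> 0"
  moreover have "M $ k \<noteq> 0"
    using det det_zero_row(1) [of k M] by (auto simp: row_def vec_eq_iff)
  ultimately obtain M' :: "real^'n^'n" where det': "det M' = det M" and "norm M' < norm M"
    using det_norm_orthogonalize_row [OF \<open>i \<noteq> k\<close>] by blast
  with norm have "norm M' < 1"
    by simp
  have "M' \<noteq> 0"
  proof
    assume "M' = 0"
    then have "det M' = 0"
      by (intro det_zero_row(1) [of k]) (simp add: row_def vec_eq_iff)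
    with det det' show False
      by simp
  qed
  then have "0 < norm M'"
    by simp
  define N where "N = (1 / norm M') *\<^sub>R M'"
  have "norm N = 1"
    using \<open>0 < norm M'\<close> by (simp add: N_def)
  have "1 < 1 / norm M'"
    using \<open>0 < norm M'\<close> \<open>norm M' < 1\<close> by simp
  then have "1 < (1 / norm M') ^ CARD('n)"
    by (rule one_less_power) simp
  then have "1 < ((1 / norm M') ^ CARD('n))\<^sup>2"
    by (rule one_less_power) simp
  moreover have "(det N)\<^sup>2 = ((1 / norm M') ^ CARD('n))\<^sup>2 * (det M)\<^sup>2"
    by (simp add: N_def det_scaleR det' power_mult_distrib)
  moreover have "0 < (det M)\<^sup>2"
    using det by simp
  ultimately have "(det M)\<^sup>2 < (det N)\<^sup>2"
    using mult_strict_right_mono [of 1 _ "(det M)\<^sup>2"] by simp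
  then show False
    using max [of N] \<open>norm N = 1\<close> by simp
qed

lemma mult_transpose_if_det_sq_maximal:
  fixes M :: "real^'n^'n"
  assumes norm: "norm M \<le> 1"
    and max: "\<And>N :: real^'n^'n. norm N \<le> 1 \<Longrightarrow> (det N)\<^sup>2 \<le> (det M)\<^sup>2"
  shows "M ** transpose M = (1 / CARD('n)) *\<^sub>R mat 1"
proof -
  have ge: "(1 / CARD('n)) ^ CARD('n) \<le> (det M)\<^sup>2"
    using max [OF norm_det_scaled_identity(1) [where 'n='n, THEN eq_refl]]
      norm_det_scaled_identity(2) [where 'n='n] by simp
  have "det M \<noteq> 0"
  proof
    assume "det M = 0"
    with ge have "(1 / real CARD('n)) ^ CARD('n) \<le> 0"
      by simp
    moreover have "0 < (1 / real CARD('n)) ^ CARD('n)"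
      by simp
    ultimately show False
      by linarith
  qed
  then have orth: "M $ i \<bullet> M $ k = 0" if "i \<noteq> k" for i k
    using rows_orthogonal_if_det_sq_maximal [OF norm _ max that] by blast
  have "M $ i \<bullet> M $ i = 1 / CARD('n)" for i
  proof (rule ccontr)
    assume "M $ i \<bullet> M $ i \<noteq> 1 / CARD('n)"
    moreover have "(\<Sum>j\<in>UNIV. M $ j \<bullet> M $ j) \<le> 1"
      using norm by (simp add: power2_norm_matrix [symmetric] power_le_one)
    ultimately have "(\<Prod>j\<in>UNIV. M $ j \<bullet> M $ j) < (1 / CARD('n)) ^ CARD('n)"
      by (intro prod_less_inverse_card_power) simp_all
    then show False
      using ge det_sq_eq_prod_if_orthogonal_rows [of M] orth by simp
  qed
  then show ?thesis
    by (simp add: vec_eq_iff matrix_mult_transpose_entry mat_def orth)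
qed

lemma det_sq_le_if_norm_le_1:
  fixes M :: "real^'n^'n"
  assumes "norm M \<le> 1"
  shows "(det M)\<^sup>2 \<le> (1 / CARD('n)) ^ CARD('n)"
proof -
  have cont: "continuous_on (cball 0 1) (\<lambda>N :: real^'n^'n. (det N)\<^sup>2)"
    unfolding det_def by (intro continuous_intros continuous_on_component continuous_on_id)
  have ne: "cball (0 :: real^'n^'n) 1 \<noteq> {}"
    by simp
  from continuous_attains_sup [OF compact_cball ne cont]
  obtain M\<^sub>0 :: "real^'n^'n" where "M\<^sub>0 \<in> cball 0 1"
    and "\<forall>N \<in> cball (0 :: real^'n^'n) 1. (det N)\<^sup>2 \<le> (det M\<^sub>0)\<^sup>2" ..
  then have "norm M\<^sub>0 \<le> 1"
    and max: "\<And>N :: real^'n^'n. norm N \<le> 1 \<Longrightarrow> (det N)\<^sup>2 \<le> (det M\<^sub>0)\<^sup>2"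
    by auto
  then have "M\<^sub>0 ** transpose M\<^sub>0 = (1 / CARD('n)) *\<^sub>R mat 1"
    by (rule mult_transpose_if_det_sq_maximal)
  then have "det (M\<^sub>0 ** transpose M\<^sub>0) = (1 / CARD('n)) ^ CARD('n)"
    by (simp add: det_scaleR)
  then have "(det M\<^sub>0)\<^sup>2 = (1 / CARD('n)) ^ CARD('n)"
    by (simp add: det_mul det_transpose power2_eq_square)
  then show ?thesis
    using max assms by simp
qed

lemma mult_transpose_if_det_sq_ge:
  fixes M :: "real^'n^'n"
  assumes "norm M \<le> 1" and "(1 / CARD('n)) ^ CARD('n) \<le> (det M)\<^sup>2"
  shows "M ** transpose M = (1 / CARD('n)) *\<^sub>R mat 1"
proof (rule mult_transpose_if_det_sq_maximal)
  show "(det N)\<^sup>2 \<le> (det M)\<^sup>2" if "norm N \<le> 1" for N :: "real^'n^'n"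
    using det_sq_le_if_norm_le_1 [OF that] assms(2) by linarith
qed (fact assms(1))

lemma mult_transpose_commute_scaled_identity:
  fixes Z :: "real^'n^'n"
  assumes "c \<noteq> 0" and "transpose Z ** Z = c *\<^sub>R mat 1"
  shows "Z ** transpose Z = c *\<^sub>R mat 1"
proof -
  have "((1 / c) *\<^sub>R transpose Z) ** Z = mat 1"
    using assms by (simp flip: scalar_matrix_assoc)
  then have "Z ** ((1 / c) *\<^sub>R transpose Z) = mat 1"
    by (simp add: matrix_left_right_inverse)
  then have inv: "(1 / c) *\<^sub>R (Z ** transpose Z) = mat 1"
    by (simp only: matrix_scalar_ac scalar_matrix_assoc)
  have "Z ** transpose Z = c *\<^sub>R ((1 / c) *\<^sub>R (Z ** transpose Z))"
    using assms(1) by simp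
  also have "\<dots> = c *\<^sub>R mat 1"
    by (simp only: inv)
  finally show ?thesis .
qed

section \<open>Sign vectors and the \<open>\<ell>\<^sub>1\<close> ball\<close>

definition sign_vectors :: "(real^'n) set" where
  "sign_vectors = {s. \<forall>i. \<bar>s $ i\<bar> = 1}"

lemma finite_sign_vectors: "finite (sign_vectors :: (real^'n) set)"
proof (rule finite_subset)
  show "sign_vectors \<subseteq> range (\<lambda>p :: 'n \<Rightarrow> bool. (\<chi> i. if p i then 1 else - 1) :: real^'n)"
  proof
    fix s :: "real^'n"
    assume "s \<in> sign_vectors"
    then have "s = (\<chi> i. if s $ i = 1 then 1 else - 1)"
      by (auto simp: sign_vectors_def vec_eq_iff abs_if split: if_splits)
    then show "s \<in> range (\<lambda>p :: 'n \<Rightarrow> bool. (\<chi> i. if p i then 1 else - 1) :: real^'n)"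
      by (intro range_eqI [where x="\<lambda>i. s $ i = 1"]) simp
  qed
qed simp

lemma uminus_sign_vector: "s \<in> sign_vectors \<Longrightarrow> - s \<in> sign_vectors"
  by (simp add: sign_vectors_def)

lemma sign_vector_component_sq: "s \<in> sign_vectors \<Longrightarrow> s $ i * s $ i = 1"
  using abs_mult_self_eq [of "s $ i"] by (simp add: sign_vectors_def)

lemma inner_sign_vector_self: "s \<in> sign_vectors \<Longrightarrow> s \<bullet> s = CARD('n)" for s :: "real^'n"
  by (simp add: inner_vec_def sign_vector_component_sq)

lemma ex_sign_vector_inner_eq_l1_norm: "\<exists>s \<in> sign_vectors. s \<bullet> x = (\<Sum>i\<in>UNIV. \<bar>x $ i\<bar>)"
proof
  show "(\<chi> i. if 0 \<le> x $ i then 1 else - 1) \<in> sign_vectors"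
    by (simp add: sign_vectors_def)
  show "(\<chi> i. if 0 \<le> x $ i then 1 else - 1) \<bullet> x = (\<Sum>i\<in>UNIV. \<bar>x $ i\<bar>)"
    unfolding inner_vec_def by (intro sum.cong) (auto simp: abs_if)
qed

lemma inner_le_l1_norm: "(\<And>i. \<bar>x $ i\<bar> \<le> 1) \<Longrightarrow> x \<bullet> y \<le> (\<Sum>i\<in>UNIV. \<bar>y $ i\<bar>)"
  unfolding inner_vec_def
proof (rule sum_mono)
  fix i
  assume "\<And>i. \<bar>x $ i\<bar> \<le> 1"
  then have "\<bar>x $ i\<bar> * \<bar>y $ i\<bar> \<le> \<bar>y $ i\<bar>"
    by (simp add: mult_left_le_one_le)
  then show "x $ i \<bullet> y $ i \<le> \<bar>y $ i\<bar>"
    by (metis abs_ge_self abs_mult inner_real_def order_trans)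
qed

lemma l1_ball_eq_Inter_halfspaces: "l1_ball = (\<Inter>s \<in> sign_vectors. {y. s \<bullet> y \<le> 1})"
proof (intro equalityI subsetI)
  fix y :: "real^'n"
  assume "y \<in> l1_ball"
  have "s \<bullet> y \<le> 1" if "s \<in> sign_vectors" for s
    using inner_le_l1_norm [of s y] that \<open>y \<in> l1_ball\<close>
    by (simp add: l1_ball_def sign_vectors_def)
  then show "y \<in> (\<Inter>s \<in> sign_vectors. {y. s \<bullet> y \<le> 1})"
    by blast
next
  fix y :: "real^'n"
  assume "y \<in> (\<Inter>s \<in> sign_vectors. {y. s \<bullet> y \<le> 1})"
  then show "y \<in> l1_ball"
    using ex_sign_vector_inner_eq_l1_norm [of y] by (auto simp: l1_ball_def)
qed

lemma convex_l1_ball: "convex l1_ball"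
  by (simp add: l1_ball_eq_Inter_halfspaces convex_INT convex_halfspace_le)

lemma sum_sign_vectors_inner_sq:
  fixes a :: "real^'n"
  shows "(\<Sum>s\<in>sign_vectors. (a \<bullet> s)\<^sup>2) = card (sign_vectors :: (real^'n) set) * (a \<bullet> a)"
proof -
  let ?N = "real (card (sign_vectors :: (real^'n) set))"
  have cross: "(\<Sum>s\<in>sign_vectors. s $ j * s $ l) = (if j = l then ?N else 0)" for j l :: 'n
  proof (cases "j = l")
    case False
    define flip :: "real^'n \<Rightarrow> real^'n"
      where "flip s = (\<chi> i. if i = j then - s $ i else s $ i)" for s
    have "(\<Sum>s\<in>sign_vectors. s $ j * s $ l) = (\<Sum>s\<in>sign_vectors. flip s $ j * flip s $ l)"
      by (rule sum.reindex_bij_witness [where i=flip and j=flip])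
        (auto simp: flip_def sign_vectors_def vec_eq_iff)
    also have "\<dots> = - (\<Sum>s\<in>sign_vectors. s $ j * s $ l)"
      using False by (simp add: flip_def sum_negf)
    finally show ?thesis
      using False by simp
  qed (simp add: sign_vector_component_sq)
  have "(\<Sum>s\<in>sign_vectors. (a \<bullet> s)\<^sup>2)
      = (\<Sum>s\<in>sign_vectors. \<Sum>j\<in>UNIV. \<Sum>l\<in>UNIV. a $ j * a $ l * (s $ j * s $ l))"
    by (simp add: inner_vec_def power2_eq_square sum_product algebra_simps)
  also have "\<dots> = (\<Sum>j\<in>UNIV. \<Sum>l\<in>UNIV. a $ j * a $ l * (\<Sum>s\<in>sign_vectors. s $ j * s $ l))"
    by (simp add: sum_distrib_left sum.swap [of _ sign_vectors])
  also have "\<dots> = card (sign_vectors :: (real^'n) set) * (a \<bullet> a)"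
    by (simp add: cross if_distrib sum.delta inner_vec_def sum_distrib_left algebra_simps
        cong: if_cong)
  finally show ?thesis .
qed

lemma norm_le_1_if_sign_vectors:
  fixes X :: "real^'n^'m"
  assumes "\<And>s. s \<in> sign_vectors \<Longrightarrow> norm (X *v s) \<le> 1"
  shows "norm X \<le> 1"
proof -
  let ?N = "card (sign_vectors :: (real^'n) set)"
  have "(norm (X *v s))\<^sup>2 = (\<Sum>k\<in>UNIV. (X $ k \<bullet> s)\<^sup>2)" for s
    by (simp add: norm_vec_def L2_set_def sum_nonneg matrix_vector_mult_def inner_vec_def)
  then have "(\<Sum>s\<in>sign_vectors. (norm (X *v s))\<^sup>2) = (\<Sum>k\<in>UNIV. \<Sum>s\<in>sign_vectors. (X $ k \<bullet> s)\<^sup>2)"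
    by (simp add: sum.swap [of _ sign_vectors])
  also have "\<dots> = ?N * (norm X)\<^sup>2"
    by (simp add: sum_sign_vectors_inner_sq power2_norm_matrix sum_distrib_left)
  finally have "?N * (norm X)\<^sup>2 = (\<Sum>s\<in>sign_vectors. (norm (X *v s))\<^sup>2)"
    by simp
  also have "\<dots> \<le> (\<Sum>s\<in>(sign_vectors :: (real^'n) set). 1)"
    by (intro sum_mono) (simp add: assms power_le_one)
  finally have "?N * (norm X)\<^sup>2 \<le> ?N * 1"
    by simp
  moreover have "0 < ?N"
    using finite_sign_vectors ex_sign_vector_inner_eq_l1_norm card_gt_0_iff by blast
  ultimately show ?thesis
    by (simp add: power_le_one_iff)
qed

lemma axis_in_l1_ball: "\<bar>c\<bar> \<le> 1 \<Longrightarrow> axis i c \<in> (l1_ball :: (real^'n) set)"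
proof -
  assume "\<bar>c\<bar> \<le> 1"
  moreover have "(\<Sum>j\<in>UNIV. \<bar>axis i c $ j\<bar>) = \<bar>c\<bar>"
    by (simp add: axis_def if_distrib [of abs] cong: if_cong)
  ultimately show ?thesis
    by (simp add: l1_ball_def)
qed

lemma polar_l1_ball: "polar_wrt l1_ball 0 = {x :: real^'n. \<forall>i. \<bar>x $ i\<bar> \<le> 1}"
proof (intro equalityI subsetI)
  fix x :: "real^'n"
  assume "x \<in> polar_wrt l1_ball 0"
  then have x: "\<forall>y\<in>l1_ball. x \<bullet> y \<le> 1"
    by (simp add: polar_wrt_def)
  have "x \<bullet> axis i c \<le> 1" if "\<bar>c\<bar> \<le> 1" for i :: 'n and c
    using x axis_in_l1_ball [OF that, of i] by blast
  from this [of 1] this [of "- 1"] show "x \<in> {x. \<forall>i. \<bar>x $ i\<bar> \<le> 1}"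
    by (auto simp: inner_axis abs_le_iff)
next
  fix x :: "real^'n"
  assume "x \<in> {x. \<forall>i. \<bar>x $ i\<bar> \<le> 1}"
  then have "x \<bullet> y \<le> 1" if "y \<in> l1_ball" for y
    using inner_le_l1_norm [of x y] that by (simp add: l1_ball_def)
  then show "x \<in> polar_wrt l1_ball 0"
    by (simp add: polar_wrt_def)
qed

lemma extreme_point_of_cube_imp_sign_vector:
  assumes "x extreme_point_of {x :: real^'n. \<forall>i. \<bar>x $ i\<bar> \<le> 1}"
  shows "x \<in> sign_vectors"
proof -
  have le: "\<bar>x $ i\<bar> \<le> 1" for i
    using assms by (simp add: extreme_point_of_def)
  have "\<bar>x $ j\<bar> = 1" for j
  proof (rule ccontr)
    assume "\<bar>x $ j\<bar> \<noteq> 1"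
    with le [of j] have "0 < 1 - \<bar>x $ j\<bar>"
      by simp
    define a where "a = x + (1 - \<bar>x $ j\<bar>) *\<^sub>R axis j 1"
    define b where "b = x - (1 - \<bar>x $ j\<bar>) *\<^sub>R axis j 1"
    have "\<bar>a $ i\<bar> \<le> 1" "\<bar>b $ i\<bar> \<le> 1" for i
      using le [of i] by (auto simp: a_def b_def axis_def abs_if)
    moreover have "x \<in> open_segment a b"
    proof -
      have "a \<noteq> b"
        using \<open>0 < 1 - \<bar>x $ j\<bar>\<close> by (auto simp: a_def b_def vec_eq_iff axis_def)
      moreover have "midpoint a b = x"
        by (simp add: midpoint_def a_def b_def vec_eq_iff field_simps)
      ultimately show ?thesis
        using midpoint_in_open_segment by metis
    qed
    ultimately show False
      using assms by (auto simp: extreme_point_of_def)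
  qed
  then show ?thesis
    by (simp add: sign_vectors_def)
qed

section \<open>Ellipsoids inside the \<open>\<ell>\<^sub>1\<close> ball\<close>

lemma inner_transpose_mult: "(transpose A *v x) \<bullet> y = x \<bullet> (A *v y)" for A :: "real^'n^'m"
  by (simp add: transpose_matrix_vector dot_lmul_matrix)

lemma inner_mult_eq_norm_transpose_mult:
  fixes C :: "real^'n^'m"
  obtains u where "norm u \<le> 1" and "x \<bullet> (C *v u) = norm (transpose C *v x)"
proof
  let ?v = "transpose C *v x"
  show "norm (if ?v = 0 then 0 else (1 / norm ?v) *\<^sub>R ?v) \<le> 1"
    by simp
  show "x \<bullet> (C *v (if ?v = 0 then 0 else (1 / norm ?v) *\<^sub>R ?v)) = norm ?v"
    by (simp only: inner_transpose_mult [symmetric]) (simp add: dot_square_norm power2_eq_square)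
qed

lemma ellipsoid_eq_image: "ellipsoid C g = (+) g ` (*v) C ` cball 0 1"
  by (force simp: ellipsoid_def image_iff add.commute mem_cball_0)

lemma ellipsoid_matrix_mult: "ellipsoid (A ** C) 0 = (*v) A ` ellipsoid C 0"
  by (auto simp: ellipsoid_def image_iff simp flip: matrix_vector_mul_assoc)

lemma measure_ellipsoid:
  fixes C :: "real^'n^'n"
  shows "measure lebesgue (ellipsoid C g) = \<bar>det C\<bar> * measure lebesgue (cball (0 :: real^'n) 1)"
  using scales_measure_by_det_linear [OF matrix_vector_mul_linear [of C]]
  by (simp add: scales_measure_by_det_def ellipsoid_eq_image measure_translation
      matrix_of_matrix_vector_mul)

lemma ellipsoid_subset_l1_ball_inner_le:
  assumes "ellipsoid Z h \<subseteq> l1_ball" and "s \<in> sign_vectors"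
  shows "norm (transpose Z *v s) + s \<bullet> h \<le> 1"
proof -
  obtain u where "norm u \<le> 1" and u: "s \<bullet> (Z *v u) = norm (transpose Z *v s)"
    by (rule inner_mult_eq_norm_transpose_mult)
  then have "Z *v u + h \<in> l1_ball"
    using assms(1) by (auto simp: ellipsoid_def)
  then have "s \<bullet> (Z *v u + h) \<le> 1"
    using assms(2) by (auto simp: l1_ball_eq_Inter_halfspaces)
  then show ?thesis
    by (simp add: inner_add_right u)
qed

lemma norm_transpose_le_1_if_ellipsoid_subset_l1_ball:
  fixes Z :: "real^'n^'n"
  assumes "ellipsoid Z h \<subseteq> l1_ball"
  shows "norm (transpose Z) \<le> 1"
proof (rule norm_le_1_if_sign_vectors)
  fix s :: "real^'n"
  assume s: "s \<in> sign_vectors"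
  have "norm (transpose Z *v s) + s \<bullet> h \<le> 1" "norm (transpose Z *v - s) + (- s) \<bullet> h \<le> 1"
    using ellipsoid_subset_l1_ball_inner_le [OF assms] s uminus_sign_vector by blast+
  moreover have "transpose Z *v - s = - (transpose Z *v s)"
    by (simp add: vec_eq_iff matrix_vector_mult_def sum_negf)
  ultimately show "norm (transpose Z *v s) \<le> 1"
    by simp
qed

lemma ellipsoid_subset_l1_ball_det_sq_ge:
  fixes Z :: "real^'n^'n"
  assumes "ellipsoid Z h \<subseteq> l1_ball" and "(1 / CARD('n)) ^ CARD('n) \<le> (det Z)\<^sup>2"
  shows "transpose Z ** Z = (1 / CARD('n)) *\<^sub>R mat 1"
  using mult_transpose_if_det_sq_ge [OF norm_transpose_le_1_if_ellipsoid_subset_l1_ball] assms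
  by (simp add: det_transpose)

lemma ellipsoid_subset_l1_ball_centered:
  fixes Z :: "real^'n^'n"
  assumes sub: "ellipsoid Z h \<subseteq> l1_ball"
    and ZZt: "Z ** transpose Z = (1 / CARD('n)) *\<^sub>R mat 1"
  shows "h = 0"
proof -
  have "norm (transpose Z *v s) = 1" if "s \<in> sign_vectors" for s
  proof -
    have "(transpose Z *v s) \<bullet> (transpose Z *v s) = s \<bullet> ((Z ** transpose Z) *v s)"
      by (simp only: inner_transpose_mult matrix_vector_mul_assoc)
    also have "\<dots> = 1"
      using that by (simp add: ZZt inner_sign_vector_self flip: matrix_scaleR_vector_ac)
    finally show ?thesis
      by (simp add: norm_eq_sqrt_inner)
  qed
  then have "s \<bullet> h \<le> 0" if "s \<in> sign_vectors" for s
    using ellipsoid_subset_l1_ball_inner_le [OF sub that] that by fastforce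
  moreover obtain s where "s \<in> sign_vectors" and "s \<bullet> h = (\<Sum>i\<in>UNIV. \<bar>h $ i\<bar>)"
    using ex_sign_vector_inner_eq_l1_norm by blast
  ultimately have "(\<Sum>i\<in>UNIV. \<bar>h $ i\<bar>) = 0"
    by (metis order_antisym sum_nonneg abs_ge_zero)
  then show "h = 0"
    by (simp add: sum_nonneg_eq_0_iff vec_eq_iff)
qed

lemma ellipsoid_scaled_identity_subset_l1_ball:
  "ellipsoid ((1 / sqrt CARD('n)) *\<^sub>R mat 1) 0 \<subseteq> (l1_ball :: (real^'n) set)"
proof
  fix y :: "real^'n"
  assume "y \<in> ellipsoid ((1 / sqrt CARD('n)) *\<^sub>R mat 1) 0"
  then obtain u :: "real^'n" where u: "norm u \<le> 1" and y: "y = (1 / sqrt CARD('n)) *\<^sub>R u"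
    by (auto simp: ellipsoid_def simp flip: matrix_scaleR_vector_ac)
  have "s \<bullet> y \<le> 1" if "s \<in> sign_vectors" for s
  proof -
    have "s \<bullet> u \<le> norm s * norm u"
      by (rule norm_cauchy_schwarz)
    also have "\<dots> \<le> sqrt CARD('n)"
      using u that by (simp add: norm_eq_sqrt_inner inner_sign_vector_self mult_left_le)
    finally show ?thesis
      by (simp add: y divide_le_eq_1 [symmetric])
  qed
  then show "y \<in> l1_ball"
    by (simp add: l1_ball_eq_Inter_halfspaces)
qed

lemma psd_matrix_scaled_identity: "0 \<le> c \<Longrightarrow> psd_matrix (c *\<^sub>R (mat 1 :: real^'n^'n))"
  by (simp add: psd_matrix_def transpose_scalar flip: matrix_scaleR_vector_ac)

lemma is_MVIE_l1_ball:
  fixes C :: "real^'n^'n"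
  assumes "is_MVIE l1_ball C g"
  shows "transpose C = C" and "C ** C = (1 / CARD('n)) *\<^sub>R mat 1" and "g = 0"
proof -
  let ?I\<^sub>0 = "(1 / sqrt CARD('n)) *\<^sub>R (mat 1 :: real^'n^'n)"
  have sub: "ellipsoid C g \<subseteq> l1_ball"
    using assms by (simp add: is_MVIE_def)
  show sym: "transpose C = C"
    using assms by (simp add: is_MVIE_def psd_matrix_def)
  have max: "measure lebesgue (ellipsoid C' g') \<le> measure lebesgue (ellipsoid C g)"
    if "psd_matrix C'" and "ellipsoid C' g' \<subseteq> l1_ball" for C' :: "real^'n^'n" and g'
    using assms that by (simp add: is_MVIE_def)
  have "measure lebesgue (ellipsoid ?I\<^sub>0 0) \<le> measure lebesgue (ellipsoid C g)"
    by (intro max psd_matrix_scaled_identity ellipsoid_scaled_identity_subset_l1_ball) simp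
  moreover have "0 < measure lebesgue (cball (0 :: real^'n) 1)"
    using content_cball_pos [of 1 "0 :: real^'n"] by (simp add: measure_completion)
  ultimately have "\<bar>det ?I\<^sub>0\<bar> \<le> \<bar>det C\<bar>"
    by (simp add: measure_ellipsoid)
  then have "(1 / CARD('n)) ^ CARD('n) \<le> (det C)\<^sup>2"
    using norm_det_scaled_identity(2) [where 'n='n] by (metis abs_le_square_iff)
  from ellipsoid_subset_l1_ball_det_sq_ge [OF sub this]
  show CC: "C ** C = (1 / CARD('n)) *\<^sub>R mat 1"
    using sym by simp
  show "g = 0"
    using ellipsoid_subset_l1_ball_centered [OF sub] CC sym by simp
qed

lemma polar_ellipsoid: "polar_wrt (ellipsoid C 0) 0 = {x. norm (transpose C *v x) \<le> 1}"
proof (intro equalityI subsetI)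
  fix x
  assume x: "x \<in> polar_wrt (ellipsoid C 0) 0"
  obtain u where "norm u \<le> 1" and u: "x \<bullet> (C *v u) = norm (transpose C *v x)"
    by (rule inner_mult_eq_norm_transpose_mult)
  then have "C *v u + 0 \<in> ellipsoid C 0"
    unfolding ellipsoid_def by blast
  with x have "x \<bullet> (C *v u) \<le> 1"
    by (simp add: polar_wrt_def)
  with u show "x \<in> {x. norm (transpose C *v x) \<le> 1}"
    by simp
next
  fix x
  assume x: "x \<in> {x. norm (transpose C *v x) \<le> 1}"
  have "x \<bullet> (C *v u) \<le> 1" if "norm u \<le> 1" for u
  proof -
    have "x \<bullet> (C *v u) \<le> norm (transpose C *v x) * norm u"
      using norm_cauchy_schwarz [of "transpose C *v x" u] by (simp only: inner_transpose_mult)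
    also have "\<dots> \<le> 1"
      using x that by (simp add: mult_le_one)
    finally show ?thesis .
  qed
  then show "x \<in> polar_wrt (ellipsoid C 0) 0"
    by (auto simp: polar_wrt_def ellipsoid_def)
qed

lemma frontier_norm_le_1:
  fixes A :: "real^'n^'m"
  assumes "norm (A *v x) = 1"
  shows "x \<in> frontier {x. norm (A *v x) \<le> 1}"
proof -
  have "x \<notin> interior {x. norm (A *v x) \<le> 1}"
  proof
    assume "x \<in> interior {x. norm (A *v x) \<le> 1}"
    then obtain e where "0 < e" and ball: "ball x e \<subseteq> {x. norm (A *v x) \<le> 1}"
      by (auto simp: mem_interior)
    have "x \<noteq> 0"
      using assms by auto
    define t where "t = e / (2 * norm x)"
    have "0 < t"
      using \<open>0 < e\<close> \<open>x \<noteq> 0\<close> by (simp add: t_def)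
    have "dist x ((1 + t) *\<^sub>R x) < e"
      using \<open>0 < e\<close> \<open>x \<noteq> 0\<close> by (simp add: t_def dist_norm algebra_simps)
    then have "norm (A *v ((1 + t) *\<^sub>R x)) \<le> 1"
      using ball by auto
    then show False
      using assms \<open>0 < t\<close> by (simp add: matrix_vector_mult_scaleR)
  qed
  moreover have "x \<in> closure {x. norm (A *v x) \<le> 1}"
    using assms closure_subset [of "{x. norm (A *v x) \<le> 1}"] by auto
  ultimately show ?thesis
    by (simp add: frontier_def)
qed

lemma sufficiently_scattered_l1_ball_imp:
  fixes S :: "real^'n^'r"
  assumes "sufficiently_scattered l1_ball S"
  obtains C :: "real^'r^'r"
  where "transpose C = C" and "C ** C = (1 / CARD('r)) *\<^sub>R mat 1"
    and "ellipsoid C 0 \<subseteq> convex hull (columns S)"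
    and "polar_wrt (convex hull (columns S)) 0 \<inter> frontier (polar_wrt (ellipsoid C 0) 0)
      = {x. x extreme_point_of {x. \<forall>i. \<bar>x $ i\<bar> \<le> 1}}"
proof -
  obtain C g where mvie: "is_MVIE l1_ball C g"
    and "ellipsoid C g \<subseteq> convex hull (columns S)"
    and "polar_wrt (convex hull (columns S)) g \<inter> frontier (polar_wrt (ellipsoid C g) g)
      = {x. x extreme_point_of polar_wrt l1_ball g}"
    using assms unfolding sufficiently_scattered_def by blast
  with is_MVIE_l1_ball [OF mvie] show thesis
    by (intro that [of C]) (simp_all add: polar_l1_ball)
qed

section \<open>The Det-Max problem\<close>

lemma column_matrix_mult: "column j (A ** S) = A *v column j S"
  by (simp add: vec_eq_iff matrix_matrix_mult_def matrix_vector_mult_def column_def)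

lemma matrix_vector_mult_mem_if_columns_mem:
  fixes A :: "real^'m^'k" and S :: "real^'n^'m"
  assumes "convex P" and "\<And>j. A *v column j S \<in> P" and "y \<in> convex hull (columns S)"
  shows "A *v y \<in> P"
proof -
  have "(*v) A ` (convex hull (columns S)) = convex hull ((*v) A ` columns S)"
    by (rule convex_hull_linear_image) (rule matrix_vector_mul_linear)
  also have "\<dots> \<subseteq> P"
    using assms(1,2) by (intro hull_minimal) (auto simp: columns_def)
  finally show ?thesis
    using assms(3) by blast
qed

lemma transpose_mult_eq_0_if_ellipsoid_subset_hull:
  fixes C :: "real^'r^'r" and S :: "real^'n^'r"
  assumes sub: "ellipsoid C g \<subseteq> convex hull (columns S)" and "invertible C"
    and x: "transpose S *v x = 0"
  shows "x = 0"
proof -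
  have "x \<bullet> y = 0" if y: "y \<in> columns S" for y
  proof -
    obtain j where "y = column j S"
      using y unfolding columns_def by blast
    then have "x \<bullet> y = (transpose S *v x) $ j"
      by (simp add: matrix_vector_mult_def transpose_def inner_vec_def column_def mult.commute)
    then show ?thesis
      using x by (simp add: transpose_matrix_vector)
  qed
  then have "convex hull (columns S) \<subseteq> {y. x \<bullet> y = 0}"
    by (intro hull_minimal) (auto simp: convex_hyperplane)
  with sub have orth: "x \<bullet> (C *v u + g) = 0" if "norm u \<le> 1" for u
    using that by (auto simp: ellipsoid_def)
  obtain u where "norm u \<le> 1" and "x \<bullet> (C *v u) = norm (transpose C *v x)"
    by (rule inner_mult_eq_norm_transpose_mult)
  with orth [of u] orth [of 0] have "transpose C *v x = 0"
    by (simp add: inner_add_right)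
  moreover have "invertible (transpose C)"
    using \<open>invertible C\<close> by (rule transpose_invertible)
  ultimately show ?thesis
    by (metis invertible_left_inverse matrix_left_invertible_ker)
qed

lemma det_pos_if_positive_definite:
  fixes A :: "real^'n^'n"
  assumes pos: "\<And>x. x \<noteq> 0 \<Longrightarrow> 0 < x \<bullet> (A *v x)"
  shows "0 < det A"
proof (rule ccontr)
  define f where "f t = det ((1 - t) *\<^sub>R mat 1 + t *\<^sub>R A)" for t
  have nonzero: "f t \<noteq> 0" if "0 \<le> t" "t \<le> 1" for t
  proof
    let ?M = "(1 - t) *\<^sub>R mat 1 + t *\<^sub>R A"
    assume "f t = 0"
    then have "\<not> invertible ?M"
      by (simp add: f_def invertible_det_nz)
    then obtain x where "x \<noteq> 0" and "?M *v x = 0"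
      using invertible_left_inverse matrix_left_invertible_ker by metis
    then have "0 = x \<bullet> (?M *v x)"
      by simp
    also have "\<dots> = (1 - t) * (x \<bullet> x) + t * (x \<bullet> (A *v x))"
      by (simp add: matrix_vector_mult_add_rdistrib inner_add_right matrix_vector_mult_scaleR
          flip: matrix_scaleR_vector_ac)
    also have "\<dots> > 0"
      using that pos [OF \<open>x \<noteq> 0\<close>] \<open>x \<noteq> 0\<close>
      by (cases "t = 0") (simp_all add: add_nonneg_pos)
    finally show False
      by simp
  qed
  have "continuous_on {0..1} f"
    unfolding f_def det_def by (intro continuous_intros continuous_on_component)
  moreover assume "\<not> 0 < det A"
  then have "f 1 \<le> 0"
    by (simp add: f_def)
  moreover have "0 \<le> f 0"
    by (simp add: f_def)
  ultimately obtain t where "0 \<le> t" "t \<le> 1" "f t = 0"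
    using IVT2' [of f 1 0 0] by auto
  with nonzero show False
    by blast
qed

lemma det_gram_pos:
  fixes S :: "real^'n^'r"
  assumes "\<And>x. transpose S *v x = 0 \<Longrightarrow> x = 0"
  shows "0 < det (S ** transpose S)"
proof (rule det_pos_if_positive_definite)
  fix x :: "real^'r"
  assume "x \<noteq> 0"
  then have "transpose S *v x \<noteq> 0"
    using assms by blast
  moreover have "x \<bullet> ((S ** transpose S) *v x) = (transpose S *v x) \<bullet> (transpose S *v x)"
    by (simp only: inner_transpose_mult matrix_vector_mul_assoc)
  ultimately show "0 < x \<bullet> ((S ** transpose S) *v x)"
    by simp
qed

lemma mult_right_cancel_if_det_gram_pos:
  fixes X Y :: "real^'r^'m" and S :: "real^'n^'r"
  assumes "0 < det (S ** transpose S)" and "X ** S = Y ** S"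
  shows "X = Y"
proof -
  obtain G where "(S ** transpose S) ** G = mat 1"
    using assms(1) by (metis less_irrefl invertible_det_nz invertible_def)
  moreover have "X ** (S ** transpose S) = Y ** (S ** transpose S)"
    by (metis assms(2) matrix_mul_assoc)
  ultimately show ?thesis
    by (metis matrix_mul_assoc matrix_mul_rid)
qed

lemma detmax_optimal_imp_invertible_transform:
  fixes Hg Hs :: "real^'r^'m" and Sg Ss :: "real^'n^'r"
  assumes rank: "rank Hg = CARD('r)" and Sg: "\<forall>j. column j Sg \<in> P"
    and opt: "detmax_optimal (Hg ** Sg) P Hs Ss" and gram: "0 < det (Sg ** transpose Sg)"
  shows "\<exists>A B. B ** A = mat 1 \<and> Ss = A ** Sg \<and> Hs = Hg ** B \<and> 1 \<le> (det A)\<^sup>2"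
proof -
  have HS: "Hg ** Sg = Hs ** Ss"
    using opt by (simp add: detmax_optimal_def detmax_feasible_def)
  have le: "det (Sg ** transpose Sg) \<le> det (Ss ** transpose Ss)"
    using opt Sg unfolding detmax_optimal_def detmax_feasible_def by blast
  obtain L where L: "L ** Hg = mat 1"
    using rank by (auto simp: full_rank_injective matrix_left_invertible_injective [symmetric])
  define B where "B = L ** Hs"
  have SgB: "Sg = B ** Ss"
    by (metis B_def HS L matrix_mul_assoc matrix_mul_lid)
  have "Sg ** transpose Sg = (B ** (Ss ** transpose Ss)) ** transpose B"
    by (simp add: SgB matrix_transpose_mul matrix_mul_assoc)
  then have "det (Sg ** transpose Sg) = (det B)\<^sup>2 * det (Ss ** transpose Ss)"
    by (simp only: det_mul det_transpose power2_eq_square ac_simps)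
  with gram le have "det B \<noteq> 0" and detB: "(det B)\<^sup>2 \<le> 1"
    by (auto simp: zero_less_mult_iff mult_le_cancel_right2)
  then obtain A where AB: "A ** B = mat 1" and BA: "B ** A = mat 1"
    by (metis invertible_det_nz invertible_def)
  have Ss: "Ss = A ** Sg"
    by (metis SgB AB matrix_mul_assoc matrix_mul_lid)
  with HS have "Hg ** Sg = (Hs ** A) ** Sg"
    by (simp add: matrix_mul_assoc)
  with gram have "Hg = Hs ** A"
    by (rule mult_right_cancel_if_det_gram_pos)
  then have Hs: "Hs = Hg ** B"
    by (metis AB matrix_mul_assoc matrix_mul_rid)
  have "(det A)\<^sup>2 * (det B)\<^sup>2 = 1"
    using AB by (metis det_I det_mul power_mult_distrib power_one)
  moreover have "(det A)\<^sup>2 * (det B)\<^sup>2 \<le> (det A)\<^sup>2"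
    using detB by (simp add: mult_left_le)
  ultimately have "1 \<le> (det A)\<^sup>2"
    by linarith
  with BA Ss Hs show ?thesis
    by blast
qed

lemma orthogonal_if_ellipsoid_image_subset_l1_ball:
  fixes A C :: "real^'n^'n"
  assumes C: "transpose C = C" "C ** C = (1 / CARD('n)) *\<^sub>R mat 1"
    and det: "1 \<le> (det A)\<^sup>2" and sub: "ellipsoid (A ** C) 0 \<subseteq> l1_ball"
  shows "transpose A ** A = mat 1"
proof -
  let ?c = "1 / real CARD('n)"
  have "det (C ** C) = ?c ^ CARD('n)"
    by (simp add: C det_scaleR)
  then have "?c ^ CARD('n) \<le> (det A)\<^sup>2 * (det C)\<^sup>2"
    using det by (simp add: det_mul power2_eq_square mult_le_cancel_right1 flip: power_mult_distrib)
  then have "transpose (A ** C) ** (A ** C) = ?c *\<^sub>R mat 1"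
    by (intro ellipsoid_subset_l1_ball_det_sq_ge [OF sub]) (simp add: det_mul power_mult_distrib)
  then have inner: "C ** (transpose A ** A) ** C = ?c *\<^sub>R mat 1"
    by (simp add: matrix_transpose_mul C matrix_mul_assoc)
  have "(?c * ?c) *\<^sub>R (transpose A ** A) = (C ** C) ** (transpose A ** A) ** (C ** C)"
    by (simp add: C matrix_scalar_ac flip: scalar_matrix_assoc)
  also have "\<dots> = C ** (C ** (transpose A ** A) ** C) ** C"
    by (simp only: matrix_mul_assoc)
  also have "\<dots> = C ** (?c *\<^sub>R mat 1) ** C"
    by (simp only: inner)
  also have "\<dots> = (?c * ?c) *\<^sub>R mat 1"
    by (simp add: C matrix_scalar_ac flip: scalar_matrix_assoc)
  finally show ?thesis
    by simp
qed

lemma transpose_mult_sign_vector_mem_sign_vectors: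
  fixes A C :: "real^'n^'n"
  assumes C: "transpose C = C" "C ** C = (1 / CARD('n)) *\<^sub>R mat 1"
    and A: "A ** transpose A = mat 1"
    and K: "\<And>y. y \<in> K \<Longrightarrow> A *v y \<in> l1_ball"
    and scattered: "polar_wrt K 0 \<inter> frontier (polar_wrt (ellipsoid C 0) 0)
      \<subseteq> {x. x extreme_point_of {x. \<forall>i. \<bar>x $ i\<bar> \<le> 1}}"
    and s: "s \<in> sign_vectors"
  shows "transpose A *v s \<in> sign_vectors"
proof -
  let ?x = "transpose A *v s"
  have "?x \<bullet> y \<le> 1" if "y \<in> K" for y
  proof -
    have "?x \<bullet> y = s \<bullet> (A *v y)"
      by (rule inner_transpose_mult)
    then show ?thesis
      using K [OF that] s by (simp add: l1_ball_eq_Inter_halfspaces)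
  qed
  then have "?x \<in> polar_wrt K 0"
    by (simp add: polar_wrt_def)
  moreover have "norm (transpose C *v ?x) = 1"
  proof -
    have "?x \<bullet> ?x = s \<bullet> s"
      by (simp only: inner_transpose_mult matrix_vector_mul_assoc A matrix_vector_mul_lid)
    moreover have "(C *v ?x) \<bullet> (C *v ?x) = (1 / CARD('n)) * (?x \<bullet> ?x)"
      using inner_transpose_mult [of C ?x "C *v ?x"]
      by (simp add: C matrix_vector_mul_assoc matrix_vector_mult_scaleR flip: matrix_scaleR_vector_ac)
    ultimately show ?thesis
      using s by (simp add: C norm_eq_sqrt_inner inner_sign_vector_self)
  qed
  then have "?x \<in> frontier (polar_wrt (ellipsoid C 0) 0)"
    unfolding polar_ellipsoid by (rule frontier_norm_le_1)
  ultimately have "?x extreme_point_of {x. \<forall>i. \<bar>x $ i\<bar> \<le> 1}"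
    using scattered by blast
  then show ?thesis
    by (rule extreme_point_of_cube_imp_sign_vector)
qed

lemma signed_permutation_if_sign_vectors_invariant:
  fixes N :: "real^'n^'n"
  assumes orth: "transpose N ** N = mat 1"
    and inv: "\<And>s. s \<in> sign_vectors \<Longrightarrow> N *v s \<in> sign_vectors"
  shows "\<exists>Q D. permutation_matrix Q \<and> sign_diagonal D \<and> N = transpose Q ** D"
proof -
  have entry: "N $ k $ i = 1 \<or> N $ k $ i = 0 \<or> N $ k $ i = - 1" for k i
  proof -
    define one :: "real^'n" where "one = (\<chi> j. 1)"
    define flip :: "real^'n" where "flip = (\<chi> j. if j = i then - 1 else 1)"
    have "one \<in> sign_vectors" "flip \<in> sign_vectors"
      by (simp_all add: one_def flip_def sign_vectors_def)
    then have "\<bar>(N *v one) $ k\<bar> = 1" "\<bar>(N *v flip) $ k\<bar> = 1"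
      using inv by (simp_all add: sign_vectors_def)
    moreover have "axis i 1 = (1 / 2) *\<^sub>R (one - flip)"
      by (simp add: vec_eq_iff axis_def one_def flip_def)
    then have "column i N = (1 / 2) *\<^sub>R (N *v one - N *v flip)"
      by (simp only: matrix_vector_mult_basis [symmetric] matrix_vector_mult_scaleR
          matrix_vector_mult_diff_distrib)
    then have "N $ k $ i = ((N *v one) $ k - (N *v flip) $ k) / 2"
      by (simp add: column_def vec_eq_iff)
    ultimately show ?thesis
      by (auto simp: abs_if split: if_splits)
  qed
  have gram: "(\<Sum>k\<in>UNIV. N $ k $ i * N $ k $ i') = (if i = i' then 1 else 0)" for i i'
    using orth by (simp add: vec_eq_iff matrix_matrix_mult_def transpose_def mat_def)
  have unique: "\<exists>!k. N $ k $ i \<noteq> 0" for i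
  proof -
    have "N $ k $ i * N $ k $ i = (if N $ k $ i \<noteq> 0 then 1 else 0)" for k
      using entry [of k i] by auto
    then have "real (card {k. N $ k $ i \<noteq> 0}) = 1"
      using gram [of i i] by (simp add: sum.If_cases)
    then obtain k where "{k. N $ k $ i \<noteq> 0} = {k}"
      by (metis card_1_singletonE of_nat_eq_1_iff)
    then show ?thesis
      by (auto simp: set_eq_iff)
  qed
  define p where "p i = (THE k. N $ k $ i \<noteq> 0)" for i
  define d where "d i = N $ p i $ i" for i
  have N: "N $ k $ i = (if k = p i then d i else 0)" for k i
    using theI' [OF unique [of i]] unique [of i] by (auto simp: p_def d_def)
  have d: "d i = 1 \<or> d i = - 1" for i
    using entry [of "p i" i] theI' [OF unique [of i]] by (auto simp: p_def d_def)
  have "inj p"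
  proof (rule injI)
    fix i i'
    assume "p i = p i'"
    then have "(\<Sum>k\<in>UNIV. N $ k $ i * N $ k $ i') = d i * d i'"
      by (simp add: N if_distrib [of "\<lambda>x. x * _"] cong: if_cong)
    then show "i = i'"
      using gram [of i i'] d [of i] d [of i'] by (auto split: if_splits)
  qed
  moreover from this have "surj p"
    by (simp add: finite_UNIV_inj_surj)
  ultimately have "p permutes UNIV"
    by (intro bij_imp_permutes) (simp_all add: bij_betw_def)
  define Q :: "real^'n^'n" where "Q = (\<chi> i j. if p i = j then 1 else 0)"
  define D :: "real^'n^'n" where "D = (\<chi> i j. if i = j then d i else 0)"
  have "permutation_matrix Q"
    unfolding permutation_matrix_def Q_def using \<open>p permutes UNIV\<close> by blast
  moreover have "sign_diagonal D"
    unfolding sign_diagonal_def D_def using d by blast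
  moreover have "(transpose Q ** D) $ k $ i = N $ k $ i" for k i
  proof -
    have "(transpose Q ** D) $ k $ i = (\<Sum>l\<in>UNIV. if l = i then (if p i = k then d i else 0) else 0)"
      unfolding matrix_matrix_mult_def vec_lambda_beta by (intro sum.cong) (auto simp: transpose_def Q_def D_def)
    then show ?thesis
      by (simp add: N eq_commute [of k])
  qed
  then have "N = transpose Q ** D"
    by (simp add: vec_eq_iff)
  ultimately show ?thesis
    by blast
qed

lemma transpose_sign_diagonal: "sign_diagonal D \<Longrightarrow> transpose D = D"
  by (auto simp: sign_diagonal_def transpose_def vec_eq_iff)

theorem theorem3:
  fixes Hg :: "real^'r^'m" and Sg :: "real^'n^'r"
    and Hs :: "real^'r^'m" and Ss :: "real^'n^'r"
  assumes "CARD('r) \<le> CARD('m)" and "CARD('r) \<le> CARD('n)"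
    and "rank Hg = CARD('r)"
    and "\<forall>j. column j Sg \<in> l1_ball"
    and "sufficiently_scattered l1_ball Sg"
    and "detmax_optimal (Hg ** Sg) l1_ball Hs Ss"
  shows "\<exists>Q D. permutation_matrix Q \<and> sign_diagonal D \<and>
           Hs = Hg ** transpose Q ** D \<and> Ss = D ** Q ** Sg"
proof -
  let ?K = "convex hull (columns Sg)"
  obtain C where C: "transpose C = C" "C ** C = (1 / CARD('r)) *\<^sub>R mat 1"
    and EK: "ellipsoid C 0 \<subseteq> ?K"
    and scattered: "polar_wrt ?K 0 \<inter> frontier (polar_wrt (ellipsoid C 0) 0)
      = {x. x extreme_point_of {x. \<forall>i. \<bar>x $ i\<bar> \<le> 1}}"
    using sufficiently_scattered_l1_ball_imp [OF assms(5)] by blast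
  have "invertible C"
    using C(2) by (auto simp: invertible_det_nz det_mul det_scaleR dest: arg_cong [of _ _ det])
  then have "0 < det (Sg ** transpose Sg)"
    by (intro det_gram_pos transpose_mult_eq_0_if_ellipsoid_subset_hull [OF EK])
  then obtain A B where BA: "B ** A = mat 1" and Ss: "Ss = A ** Sg" and Hs: "Hs = Hg ** B"
    and det: "1 \<le> (det A)\<^sup>2"
    using detmax_optimal_imp_invertible_transform assms(3,4,6) by blast
  have AK: "A *v y \<in> l1_ball" if "y \<in> ?K" for y
    using assms(6) that Ss convex_l1_ball
    by (auto simp: detmax_optimal_def detmax_feasible_def column_matrix_mult
        intro: matrix_vector_mult_mem_if_columns_mem)
  then have "ellipsoid (A ** C) 0 \<subseteq> l1_ball"
    unfolding ellipsoid_matrix_mult using EK by blast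
  then have "transpose A ** A = mat 1"
    by (rule orthogonal_if_ellipsoid_image_subset_l1_ball [OF C det])
  then have AAt: "A ** transpose A = mat 1" and "transpose (transpose A) ** transpose A = mat 1"
    by (simp_all add: matrix_left_right_inverse)
  moreover have "transpose A *v s \<in> sign_vectors" if "s \<in> sign_vectors" for s
    using transpose_mult_sign_vector_mem_sign_vectors [OF C AAt AK equalityD1 [OF scattered] that] .
  ultimately obtain Q D where "permutation_matrix Q" and "sign_diagonal D"
    and At: "transpose A = transpose Q ** D"
    using signed_permutation_if_sign_vectors_invariant by blast
  have "B = transpose A"
    by (metis AAt BA matrix_mul_assoc matrix_mul_lid matrix_mul_rid)
  moreover have "A = D ** Q"
    using At \<open>sign_diagonal D\<close>
    by (metis matrix_transpose_mul transpose_transpose transpose_sign_diagonal)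
  ultimately show ?thesis
    using \<open>permutation_matrix Q\<close> \<open>sign_diagonal D\<close> Hs Ss At by (metis matrix_mul_assoc)
qed

end
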